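(* Let $\Omega$ be a topological space, $X$ a locally convex topological vector space with defining family of seminorms $\mathfrak{A}$, and $X_0$ a dense linear subspace of $X$. If $\Omega$ is paracompact and Hausdorff, or $X$ is separable, then for each $\epsilon > 0$, $p \in \mathfrak{A}$ and $f \in C(\Omega, X)$ there is $g \in C(\Omega, X_0)$ such that $\sup_{t\in\Omega} p(f(t) - g(t)) < \epsilon$. *)

theory Defs
  imports "HOL-Analysis.Analysis"
begin

definition seminorm :: "('b::real_vector \<Rightarrow> real) \<Rightarrow> bool" where
  "seminorm p \<longleftrightarrow>
     (\<forall>x y. p (x + y) \<le> p x + p y) \<and> (\<forall>c x. p (c *\<^sub>R x) = \<bar>c\<bar> * p x)"

definition seminorm_topology :: "('b::real_vector \<Rightarrow> real) set \<Rightarrow> 'b topology" where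
  "seminorm_topology \<A> = topology (\<lambda>U. \<forall>x\<in>U. \<exists>F r. finite F \<and> F \<subseteq> \<A> \<and> r > 0 \<and>
       {y. \<forall>p\<in>F. p (y - x) < r} \<subseteq> U)"

definition paracompact_space :: "'a topology \<Rightarrow> bool" where
  "paracompact_space T \<longleftrightarrow>
     (\<forall>\<U>. (\<forall>U\<in>\<U>. openin T U) \<and> topspace T \<subseteq> \<Union>\<U> \<longrightarrow>
        (\<exists>\<V>. (\<forall>V\<in>\<V>. openin T V) \<and> topspace T \<subseteq> \<Union>\<V> \<and>
             (\<forall>V\<in>\<V>. \<exists>U\<in>\<U>. V \<subseteq> U) \<and> locally_finite_in T \<V>))"

end

theory Submission
  imports Defs
begin

text \<open>
  Fix \<open>r > 0\<close>. Since \<open>X\<^sub>0\<close> is dense, the open sets \<open>{t. p (f t - x) < r}\<close> with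
  \<open>x \<in> X\<^sub>0\<close> cover \<open>\<Omega>\<close>. Given a locally finite partition of unity \<open>(w\<^sub>i)\<close> with
  centres \<open>x\<^sub>i \<in> X\<^sub>0\<close> such that \<open>p (f t - x\<^sub>i) < r\<close> wherever \<open>w\<^sub>i t \<noteq> 0\<close>, the map
  \<open>g = (\<Sum>i. w\<^sub>i x\<^sub>i)\<close> is continuous into \<open>X\<^sub>0\<close>, and \<open>p (f t - g t) < r\<close> because \<open>g t\<close>
  is a convex combination of points \<open>p\<close>-close to \<open>f t\<close>. If \<open>\<Omega>\<close> is paracompact
  Hausdorff, such a partition comes from a locally finite refinement of the cover, a closed
  shrinking of it, and Urysohn's lemma. If \<open>X\<close> is separable, countably many centres
  \<open>x\<^sub>n\<close> suffice, and the cover by the cozero sets of \<open>\<phi>\<^sub>n = max 0 (r - p (f - x\<^sub>n))\<close> is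
  made locally finite directly.
\<close>

section \<open>Seminorms\<close>

lemma seminorm_add: "seminorm p \<Longrightarrow> p (x + y) \<le> p x + p y"
  unfolding seminorm_def by blast

lemma seminorm_scaleR: "seminorm p \<Longrightarrow> p (c *\<^sub>R x) = \<bar>c\<bar> * p x"
  unfolding seminorm_def by blast

lemma seminorm_zero: "seminorm p \<Longrightarrow> p 0 = 0"
  using seminorm_scaleR [of p 0 0] by simp

lemma seminorm_minus: "seminorm p \<Longrightarrow> p (- x) = p x"
  using seminorm_scaleR [of p "-1" x] by simp

lemma seminorm_minus_commute: "seminorm p \<Longrightarrow> p (x - y) = p (y - x)"
  by (metis minus_diff_eq seminorm_minus)

lemma seminorm_nonneg: "seminorm p \<Longrightarrow> 0 \<le> p x"
  using seminorm_add [of p x "- x"] by (simp add: seminorm_zero seminorm_minus)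

lemma seminorm_diff_triangle: "seminorm p \<Longrightarrow> p (x - z) \<le> p (x - y) + p (y - z)"
  using seminorm_add [of p "x - y" "y - z"] by simp

lemma seminorm_sum_le: "seminorm p \<Longrightarrow> p (sum f S) \<le> (\<Sum>i\<in>S. p (f i))"
proof (induction S rule: infinite_finite_induct)
  case (insert x F)
  then show ?case
    using seminorm_add [OF insert.prems, of "f x" "sum f F"] by simp
qed (simp_all add: seminorm_zero)

lemma seminorm_diff_convex_combination_less:
  assumes p: "seminorm p"
    and w: "\<And>i. i \<in> J \<Longrightarrow> 0 < w i" "sum w J = 1"
    and close: "\<And>i. i \<in> J \<Longrightarrow> p (y - x i) < r"
  shows "p (y - (\<Sum>i\<in>J. w i *\<^sub>R x i)) < r"
proof -
  have J: "finite J" "J \<noteq> {}"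
    using w(2) by (auto intro: ccontr)
  have "(\<Sum>i\<in>J. w i *\<^sub>R (y - x i)) = (\<Sum>i\<in>J. w i) *\<^sub>R y - (\<Sum>i\<in>J. w i *\<^sub>R x i)"
    by (simp add: scaleR_diff_right sum_subtractf scaleR_sum_left)
  then have "y - (\<Sum>i\<in>J. w i *\<^sub>R x i) = (\<Sum>i\<in>J. w i *\<^sub>R (y - x i))"
    by (simp add: w(2))
  then have "p (y - (\<Sum>i\<in>J. w i *\<^sub>R x i)) \<le> (\<Sum>i\<in>J. w i * p (y - x i))"
    using seminorm_sum_le [OF p, of "\<lambda>i. w i *\<^sub>R (y - x i)" J] w(1)
    by (simp add: seminorm_scaleR [OF p] less_imp_le)
  also have "\<dots> < (\<Sum>i\<in>J. w i * r)"
    using J w(1) close by (intro sum_strict_mono mult_strict_left_mono) auto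
  also have "\<dots> = r"
    by (simp flip: sum_distrib_right add: w(2))
  finally show ?thesis .
qed

section \<open>The topology generated by a family of seminorms\<close>

lemma istopology_seminorm_balls:
  fixes \<A> :: "('a::real_vector \<Rightarrow> real) set"
  shows "istopology (\<lambda>U. \<forall>x\<in>U. \<exists>F r. finite F \<and> F \<subseteq> \<A> \<and> r > 0 \<and> {y. \<forall>p\<in>F. p (y - x) < r} \<subseteq> U)"
  (is "istopology ?open")
  unfolding istopology_def
proof (intro conjI allI impI)
  fix S T :: "'a set"
  assume S: "?open S" and T: "?open T"
  show "?open (S \<inter> T)"
  proof
    fix x assume "x \<in> S \<inter> T"
    then have "\<exists>F r. finite F \<and> F \<subseteq> \<A> \<and> r > 0 \<and> {y. \<forall>p\<in>F. p (y - x) < r} \<subseteq> S"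
      and "\<exists>F r. finite F \<and> F \<subseteq> \<A> \<and> r > 0 \<and> {y. \<forall>p\<in>F. p (y - x) < r} \<subseteq> T"
      using S T by auto
    then obtain F r G s where "finite F" "F \<subseteq> \<A>" "r > 0" "{y. \<forall>p\<in>F. p (y - x) < r} \<subseteq> S"
      and "finite G" "G \<subseteq> \<A>" "s > 0" "{y. \<forall>p\<in>G. p (y - x) < s} \<subseteq> T"
      by (elim exE conjE)
    then show "\<exists>F r. finite F \<and> F \<subseteq> \<A> \<and> r > 0 \<and> {y. \<forall>p\<in>F. p (y - x) < r} \<subseteq> S \<inter> T"
      by (intro exI [of _ "F \<union> G"] exI [of _ "min r s"]) auto
  qed
next
  fix K :: "'a set set"
  assume K: "\<forall>S\<in>K. ?open S"
  show "?open (\<Union>K)"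
  proof
    fix x assume "x \<in> \<Union>K"
    then obtain S where "S \<in> K" "x \<in> S"
      by (elim UnionE)
    with K have "\<exists>F r. finite F \<and> F \<subseteq> \<A> \<and> r > 0 \<and> {y. \<forall>p\<in>F. p (y - x) < r} \<subseteq> S"
      by simp
    with \<open>S \<in> K\<close> show "\<exists>F r. finite F \<and> F \<subseteq> \<A> \<and> r > 0 \<and> {y. \<forall>p\<in>F. p (y - x) < r} \<subseteq> \<Union>K"
      by (meson Union_upper order_trans)
  qed
qed

lemma openin_seminorm_topology:
  "openin (seminorm_topology \<A>) U \<longleftrightarrow>
     (\<forall>x\<in>U. \<exists>F r. finite F \<and> F \<subseteq> \<A> \<and> r > 0 \<and> {y. \<forall>p\<in>F. p (y - x) < r} \<subseteq> U)"
  unfolding seminorm_topology_def by (subst topology_inverse' [OF istopology_seminorm_balls]) (rule refl)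

lemma topspace_seminorm_topology [simp]: "topspace (seminorm_topology \<A>) = UNIV"
proof -
  have "openin (seminorm_topology \<A>) UNIV"
    unfolding openin_seminorm_topology by (intro ballI exI [of _ "{}"] exI [of _ "1::real"]) simp
  then show ?thesis
    using openin_subset by blast
qed

lemma openin_seminorm_ball:
  assumes "seminorm p" "p \<in> \<A>"
  shows "openin (seminorm_topology \<A>) {y. p (y - z) < r}"
  unfolding openin_seminorm_topology
proof
  fix x assume x: "x \<in> {y. p (y - z) < r}"
  have "p (y - z) < r" if "p (y - x) < r - p (x - z)" for y
    using that seminorm_diff_triangle [OF assms(1), of y z x] by linarith
  then have "{y. \<forall>q\<in>{p}. q (y - x) < r - p (x - z)} \<subseteq> {y. p (y - z) < r}"
    by auto
  with x assms(2) show "\<exists>F r'. finite F \<and> F \<subseteq> \<A> \<and> r' > 0 \<and> {y. \<forall>p\<in>F. p (y - x) < r'} \<subseteq> {y. p (y - z) < r}"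
    by (intro exI [of _ "{p}"] exI [of _ "r - p (x - z)"]) auto
qed

lemma continuous_map_seminorm_topology_iff:
  assumes "\<forall>q\<in>\<A>. seminorm q"
  shows "continuous_map X (seminorm_topology \<A>) h \<longleftrightarrow>
    (\<forall>t\<in>topspace X. \<forall>q\<in>\<A>. \<forall>e>0. \<forall>\<^sub>F s in atin X t. q (h s - h t) < e)"
  (is "?lhs \<longleftrightarrow> ?rhs")
proof
  assume ?lhs
  show ?rhs
  proof (intro ballI allI impI)
    fix t q and e :: real
    assume "t \<in> topspace X" "q \<in> \<A>" "e > 0"
    moreover have "openin (seminorm_topology \<A>) {y. q (y - h t) < e}"
      using assms \<open>q \<in> \<A>\<close> by (simp add: openin_seminorm_ball)
    ultimately show "\<forall>\<^sub>F s in atin X t. q (h s - h t) < e"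
      using \<open>?lhs\<close> assms by (fastforce simp: continuous_map_atin limitin_def seminorm_zero)
  qed
next
  assume ev: ?rhs
  show ?lhs
    unfolding continuous_map_atin limitin_def
  proof (intro ballI allI impI conjI)
    fix t U
    assume t: "t \<in> topspace X" and U: "openin (seminorm_topology \<A>) U \<and> h t \<in> U"
    then obtain F r where F: "finite F" "F \<subseteq> \<A>" "r > 0" "{y. \<forall>q\<in>F. q (y - h t) < r} \<subseteq> U"
      unfolding openin_seminorm_topology by blast
    have "\<forall>\<^sub>F s in atin X t. \<forall>q\<in>F. q (h s - h t) < r"
      using F ev t by (intro eventually_ball_finite) auto
    then show "\<forall>\<^sub>F s in atin X t. h s \<in> U"
      by (rule eventually_mono) (use F(4) in blast)
  qed simp
qed

lemma continuous_map_seminorm_diff: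
  assumes "\<forall>p\<in>\<A>. seminorm p" "q \<in> \<A>"
  shows "continuous_map (seminorm_topology \<A>) euclideanreal (\<lambda>y. q (y - z))"
  unfolding continuous_map_atin limitin_canonical_iff
proof (intro ballI tendstoI)
  fix x and e :: real
  assume "e > 0"
  have q: "seminorm q"
    using assms by blast
  have "\<forall>\<^sub>F y in atin (seminorm_topology \<A>) x. q (y - x) < e"
    using continuous_map_id [of "seminorm_topology \<A>"] assms \<open>e > 0\<close>
    unfolding continuous_map_seminorm_topology_iff [OF assms(1)] by simp
  then show "\<forall>\<^sub>F y in atin (seminorm_topology \<A>) x. dist (q (y - z)) (q (x - z)) < e"
  proof (rule eventually_mono)
    fix y assume "q (y - x) < e"
    moreover have "q (y - z) \<le> q (y - x) + q (x - z)" "q (x - z) \<le> q (x - y) + q (y - z)"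
      using seminorm_diff_triangle [OF q] by blast+
    ultimately show "dist (q (y - z)) (q (x - z)) < e"
      using seminorm_minus_commute [OF q, of x y] unfolding dist_real_def abs_less_iff by linarith
  qed
qed

lemma continuous_map_seminorm_diff_compose:
  assumes "\<forall>p\<in>\<A>. seminorm p" "q \<in> \<A>" "continuous_map X (seminorm_topology \<A>) f"
  shows "continuous_map X euclideanreal (\<lambda>t. q (f t - z))"
  using continuous_map_compose [OF assms(3) continuous_map_seminorm_diff [OF assms(1,2)]]
  by (simp add: o_def)

lemma seminorm_topology_dense_approx:
  assumes "seminorm p" "p \<in> \<A>" "seminorm_topology \<A> closure_of S = UNIV" "e > 0"
  shows "\<exists>y\<in>S. p (y - z) < e"
proof -
  have "z \<in> seminorm_topology \<A> closure_of S"
    using assms(3) by simp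
  then have "\<forall>T. z \<in> T \<and> openin (seminorm_topology \<A>) T \<longrightarrow> (\<exists>y. y \<in> S \<and> y \<in> T)"
    unfolding in_closure_of by (rule conjunct2)
  moreover have "z \<in> {y. p (y - z) < e}"
    using assms(1,4) by (simp add: seminorm_zero)
  ultimately have "\<exists>y. y \<in> S \<and> y \<in> {y. p (y - z) < e}"
    using openin_seminorm_ball [OF assms(1,2), of z e] by (elim allE [of _ "{y. p (y - z) < e}"]) simp
  then show ?thesis
    by blast
qed

section \<open>Locally finite cozero covers and partitions of unity\<close>

lemma continuous_map_locally:
  assumes "\<And>t. t \<in> topspace X \<Longrightarrow>
    \<exists>W g. openin X W \<and> t \<in> W \<and> continuous_map X Y g \<and> (\<forall>s\<in>W. h s = g s)"
  shows "continuous_map X Y h"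
  unfolding continuous_map_atin
proof
  fix t assume t: "t \<in> topspace X"
  then obtain W g where W: "openin X W" "t \<in> W" and g: "continuous_map X Y g" "\<forall>s\<in>W. h s = g s"
    using assms by blast
  have "\<forall>\<^sub>F s in atin X t. g s = h s"
    using W g(2) unfolding eventually_atin by auto
  moreover have "limitin Y g (h t) (atin X t)"
    using g t W(2) by (simp add: continuous_map_atin)
  ultimately show "limitin Y h (h t) (atin X t)"
    by (rule limitin_transform_eventually)
qed

lemma continuous_map_sum_locally_finite:
  fixes u :: "'i \<Rightarrow> 'a \<Rightarrow> 'c::comm_monoid_add"
  assumes finite_sums: "\<And>K. finite K \<Longrightarrow> K \<subseteq> I \<Longrightarrow> continuous_map X Y (\<lambda>t. \<Sum>i\<in>K. u i t)"
    and locally_finite: "\<And>t. t \<in> topspace X \<Longrightarrow>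
      \<exists>W. openin X W \<and> t \<in> W \<and> finite {i\<in>I. \<exists>s\<in>W. u i s \<noteq> 0}"
  shows "continuous_map X Y (\<lambda>t. \<Sum>i\<in>{i\<in>I. u i t \<noteq> 0}. u i t)"
proof (rule continuous_map_locally)
  fix t assume "t \<in> topspace X"
  then obtain W where W: "openin X W" "t \<in> W" and fin: "finite {i\<in>I. \<exists>s\<in>W. u i s \<noteq> 0}"
    using locally_finite by blast
  have "(\<Sum>i\<in>{i\<in>I. u i s \<noteq> 0}. u i s) = (\<Sum>i\<in>{i\<in>I. \<exists>s\<in>W. u i s \<noteq> 0}. u i s)" if "s \<in> W" for s
    using that by (intro sum.mono_neutral_left [OF fin]) auto
  with W fin finite_sums show "\<exists>W g. openin X W \<and> t \<in> W \<and> continuous_map X Y g \<and>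
      (\<forall>s\<in>W. (\<Sum>i\<in>{i\<in>I. u i s \<noteq> 0}. u i s) = g s)"
    by (intro exI [of _ W] exI [of _ "\<lambda>s. \<Sum>i\<in>{i\<in>I. \<exists>s\<in>W. u i s \<noteq> 0}. u i s"]) auto
qed

lemma continuous_map_seminorm_topology_sum_scaleR:
  assumes seminorms: "\<forall>q\<in>\<A>. seminorm q" and "finite K"
    and c: "\<And>i. i \<in> K \<Longrightarrow> continuous_map X euclideanreal (c i)"
  shows "continuous_map X (seminorm_topology \<A>) (\<lambda>t. \<Sum>i\<in>K. c i t *\<^sub>R x i)"
  unfolding continuous_map_seminorm_topology_iff [OF seminorms]
proof (intro ballI allI impI)
  fix t q and e :: real
  assume t: "t \<in> topspace X" and "q \<in> \<A>" "e > 0"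
  then have q: "seminorm q"
    using seminorms by blast
  have "((\<lambda>s. c i s) \<longlongrightarrow> c i t) (atin X t)" if "i \<in> K" for i
    using c [OF that] t by (simp add: continuous_map_atin)
  then have "((\<lambda>s. \<Sum>i\<in>K. \<bar>c i s - c i t\<bar> * q (x i)) \<longlongrightarrow> (\<Sum>i\<in>K. \<bar>c i t - c i t\<bar> * q (x i))) (atin X t)"
    by (intro tendsto_intros)
  then have "\<forall>\<^sub>F s in atin X t. (\<Sum>i\<in>K. \<bar>c i s - c i t\<bar> * q (x i)) < e"
    using \<open>e > 0\<close> by (simp add: order_tendstoD(2))
  then show "\<forall>\<^sub>F s in atin X t. q ((\<Sum>i\<in>K. c i s *\<^sub>R x i) - (\<Sum>i\<in>K. c i t *\<^sub>R x i)) < e"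
  proof (rule eventually_mono)
    fix s
    have "q ((\<Sum>i\<in>K. c i s *\<^sub>R x i) - (\<Sum>i\<in>K. c i t *\<^sub>R x i)) = q (\<Sum>i\<in>K. (c i s - c i t) *\<^sub>R x i)"
      by (simp add: sum_subtractf scaleR_diff_left)
    also have "\<dots> \<le> (\<Sum>i\<in>K. q ((c i s - c i t) *\<^sub>R x i))"
      by (rule seminorm_sum_le [OF q])
    also have "\<dots> = (\<Sum>i\<in>K. \<bar>c i s - c i t\<bar> * q (x i))"
      by (simp add: seminorm_scaleR [OF q])
    finally show "(\<Sum>i\<in>K. \<bar>c i s - c i t\<bar> * q (x i)) < e \<Longrightarrow>
        q ((\<Sum>i\<in>K. c i s *\<^sub>R x i) - (\<Sum>i\<in>K. c i t *\<^sub>R x i)) < e"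
      by linarith
  qed
qed

definition locally_finite_cozero_cover :: "'a topology \<Rightarrow> 'i set \<Rightarrow> ('i \<Rightarrow> 'a \<Rightarrow> real) \<Rightarrow> bool"
  where "locally_finite_cozero_cover X I h \<longleftrightarrow>
    (\<forall>i\<in>I. continuous_map X euclideanreal (h i) \<and> (\<forall>t\<in>topspace X. 0 \<le> h i t)) \<and>
    (\<forall>t\<in>topspace X. \<exists>i\<in>I. h i t \<noteq> 0) \<and>
    (\<forall>t\<in>topspace X. \<exists>W. openin X W \<and> t \<in> W \<and> finite {i\<in>I. \<exists>s\<in>W. h i s \<noteq> 0})"

lemma locally_finite_cozero_coverI:
  assumes "\<And>i. i \<in> I \<Longrightarrow> continuous_map X euclideanreal (h i)"
    and "\<And>i t. i \<in> I \<Longrightarrow> t \<in> topspace X \<Longrightarrow> 0 \<le> h i t"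
    and "\<And>t. t \<in> topspace X \<Longrightarrow> \<exists>i\<in>I. h i t \<noteq> 0"
    and "\<And>t. t \<in> topspace X \<Longrightarrow> \<exists>W. openin X W \<and> t \<in> W \<and> finite {i\<in>I. \<exists>s\<in>W. h i s \<noteq> 0}"
  shows "locally_finite_cozero_cover X I h"
  using assms unfolding locally_finite_cozero_cover_def by blast

lemma locally_finite_cozero_coverD:
  assumes "locally_finite_cozero_cover X I h"
  shows "\<And>i. i \<in> I \<Longrightarrow> continuous_map X euclideanreal (h i)"
    and "\<And>i t. i \<in> I \<Longrightarrow> t \<in> topspace X \<Longrightarrow> 0 \<le> h i t"
    and "\<And>t. t \<in> topspace X \<Longrightarrow> \<exists>i\<in>I. h i t \<noteq> 0"
    and "\<And>t. t \<in> topspace X \<Longrightarrow> \<exists>W. openin X W \<and> t \<in> W \<and> finite {i\<in>I. \<exists>s\<in>W. h i s \<noteq> 0}"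
  using assms unfolding locally_finite_cozero_cover_def by blast+

lemma locally_finite_cozero_cover_normalize:
  assumes cover: "locally_finite_cozero_cover X I h"
  obtains w where "locally_finite_cozero_cover X I w" "\<forall>i t. w i t \<noteq> 0 \<longrightarrow> h i t \<noteq> 0"
    "\<forall>t\<in>topspace X. (\<Sum>i\<in>{i\<in>I. w i t \<noteq> 0}. w i t) = 1"
proof -
  note h = locally_finite_cozero_coverD [OF cover]
  define D where "D t = (\<Sum>i\<in>{i\<in>I. h i t \<noteq> 0}. h i t)" for t
  define w where "w i = (\<lambda>t. h i t / D t)" for i
  have D_pos: "0 < D t" if t: "t \<in> topspace X" for t
  proof -
    obtain W where "t \<in> W" "finite {i\<in>I. \<exists>s\<in>W. h i s \<noteq> 0}"
      using h(4) [OF t] by blast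
    then have "finite {i\<in>I. h i t \<noteq> 0}"
      by (rule_tac rev_finite_subset) auto
    moreover have "{i\<in>I. h i t \<noteq> 0} \<noteq> {}"
      using h(3) [OF t] by blast
    moreover have "0 < h i t" if "i \<in> {i\<in>I. h i t \<noteq> 0}" for i
      using h(2) [of i t] t that by simp
    ultimately show ?thesis
      unfolding D_def by (rule sum_pos)
  qed
  have support: "\<forall>i t. w i t \<noteq> 0 \<longrightarrow> h i t \<noteq> 0"
    by (simp add: w_def)
  have same_support: "{i\<in>I. w i t \<noteq> 0} = {i\<in>I. h i t \<noteq> 0}" if "t \<in> topspace X" for t
    using D_pos [OF that] by (auto simp: w_def)
  have D_continuous: "continuous_map X euclideanreal D"
    unfolding D_def by (intro continuous_map_sum_locally_finite continuous_map_sum h(1) h(4)) auto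
  have D_nonzero: "D t \<noteq> 0" if "t \<in> topspace X" for t
    using D_pos [OF that] by simp
  have "locally_finite_cozero_cover X I w"
  proof (rule locally_finite_cozero_coverI)
    show "continuous_map X euclideanreal (w i)" if "i \<in> I" for i
      unfolding w_def by (rule continuous_map_real_divide [OF h(1) [OF that] D_continuous D_nonzero])
    show "0 \<le> w i t" if "i \<in> I" "t \<in> topspace X" for i t
      using h(2) [OF that] D_pos [OF that(2)] by (simp add: w_def)
    show "\<exists>i\<in>I. w i t \<noteq> 0" if "t \<in> topspace X" for t
      using h(3) [OF that] same_support [OF that] by blast
    show "\<exists>W. openin X W \<and> t \<in> W \<and> finite {i\<in>I. \<exists>s\<in>W. w i s \<noteq> 0}" if t: "t \<in> topspace X" for t
    proof -
      obtain W where "openin X W" "t \<in> W" "finite {i\<in>I. \<exists>s\<in>W. h i s \<noteq> 0}"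
        using h(4) [OF t] by blast
      moreover have "{i\<in>I. \<exists>s\<in>W. w i s \<noteq> 0} \<subseteq> {i\<in>I. \<exists>s\<in>W. h i s \<noteq> 0}"
        using support by blast
      ultimately show ?thesis
        by (meson rev_finite_subset)
    qed
  qed
  moreover note support
  moreover have "\<forall>t\<in>topspace X. (\<Sum>i\<in>{i\<in>I. w i t \<noteq> 0}. w i t) = 1"
  proof
    fix t assume t: "t \<in> topspace X"
    show "(\<Sum>i\<in>{i\<in>I. w i t \<noteq> 0}. w i t) = 1"
      unfolding same_support [OF t] using D_nonzero [OF t]
      by (simp add: w_def D_def flip: sum_divide_distrib)
  qed
  ultimately show thesis
    by (rule that)
qed

lemma approximation_from_partition_of_unity:
  fixes \<A> :: "('b::real_vector \<Rightarrow> real) set" and x :: "'i \<Rightarrow> 'b"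
  assumes seminorms: "\<forall>q\<in>\<A>. seminorm q" and p: "p \<in> \<A>" and X\<^sub>0: "subspace X\<^sub>0"
    and cover: "locally_finite_cozero_cover \<Omega> I w"
    and partition: "\<forall>t\<in>topspace \<Omega>. (\<Sum>i\<in>{i\<in>I. w i t \<noteq> 0}. w i t) = 1"
    and x: "\<And>i. i \<in> I \<Longrightarrow> x i \<in> X\<^sub>0"
    and close: "\<And>i t. i \<in> I \<Longrightarrow> t \<in> topspace \<Omega> \<Longrightarrow> w i t \<noteq> 0 \<Longrightarrow> p (f t - x i) < r"
  shows "\<exists>g. continuous_map \<Omega> (subtopology (seminorm_topology \<A>) X\<^sub>0) g \<and>
             (\<forall>t\<in>topspace \<Omega>. p (f t - g t) < r)"
proof -
  note w = locally_finite_cozero_coverD [OF cover]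
  define J where "J t = {i\<in>I. w i t \<noteq> 0}" for t
  define g where "g t = (\<Sum>i\<in>J t. w i t *\<^sub>R x i)" for t
  have "continuous_map \<Omega> (seminorm_topology \<A>) (\<lambda>t. \<Sum>i\<in>{i\<in>I. w i t *\<^sub>R x i \<noteq> 0}. w i t *\<^sub>R x i)"
  proof (rule continuous_map_sum_locally_finite)
    show "continuous_map \<Omega> (seminorm_topology \<A>) (\<lambda>t. \<Sum>i\<in>K. w i t *\<^sub>R x i)"
      if "finite K" "K \<subseteq> I" for K
      using that w(1) by (intro continuous_map_seminorm_topology_sum_scaleR seminorms) auto
    show "\<exists>W. openin \<Omega> W \<and> t \<in> W \<and> finite {i\<in>I. \<exists>s\<in>W. w i s *\<^sub>R x i \<noteq> 0}"
      if t: "t \<in> topspace \<Omega>" for t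
    proof -
      obtain W where "openin \<Omega> W" "t \<in> W" "finite {i\<in>I. \<exists>s\<in>W. w i s \<noteq> 0}"
        using w(4) [OF t] by blast
      moreover have "{i\<in>I. \<exists>s\<in>W. w i s *\<^sub>R x i \<noteq> 0} \<subseteq> {i\<in>I. \<exists>s\<in>W. w i s \<noteq> 0}"
        by auto
      ultimately show ?thesis
        by (meson rev_finite_subset)
    qed
  qed
  moreover have "(\<Sum>i\<in>{i\<in>I. w i t *\<^sub>R x i \<noteq> 0}. w i t *\<^sub>R x i) = g t" if "t \<in> topspace \<Omega>" for t
  proof -
    have sum_one: "(\<Sum>i\<in>J t. w i t) = 1"
      using partition that unfolding J_def by blast
    have "finite (J t)"
    proof (rule ccontr)
      assume "infinite (J t)"
      with sum_one show False
        by simp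
    qed
    then show ?thesis
      unfolding g_def by (intro sum.mono_neutral_left) (auto simp: J_def)
  qed
  ultimately have "continuous_map \<Omega> (seminorm_topology \<A>) g"
    by (rule continuous_map_eq)
  moreover have "g t \<in> X\<^sub>0" for t
    unfolding g_def J_def using x by (intro subspace_sum [OF X\<^sub>0] subspace_scale [OF X\<^sub>0]) auto
  moreover have "p (f t - g t) < r" if t: "t \<in> topspace \<Omega>" for t
    unfolding g_def
  proof (rule seminorm_diff_convex_combination_less)
    show "seminorm p"
      using seminorms p by blast
    show "0 < w i t" if "i \<in> J t" for i
      using w(2) [of i t] t that by (simp add: J_def)
    show "(\<Sum>i\<in>J t. w i t) = 1"
      using partition t by (simp add: J_def)
    show "p (f t - x i) < r" if "i \<in> J t" for i
      using close t that by (simp add: J_def)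
  qed
  ultimately show ?thesis
    by (intro exI [of _ g]) (auto simp: continuous_map_in_subtopology)
qed

lemma approximation_from_cozero_cover:
  fixes \<A> :: "('b::real_vector \<Rightarrow> real) set" and x :: "'i \<Rightarrow> 'b"
  assumes seminorms: "\<forall>q\<in>\<A>. seminorm q" and p: "p \<in> \<A>" and X\<^sub>0: "subspace X\<^sub>0"
    and cover: "locally_finite_cozero_cover \<Omega> I h"
    and x: "\<And>i. i \<in> I \<Longrightarrow> x i \<in> X\<^sub>0"
    and close: "\<And>i t. i \<in> I \<Longrightarrow> t \<in> topspace \<Omega> \<Longrightarrow> h i t \<noteq> 0 \<Longrightarrow> p (f t - x i) < r"
  shows "\<exists>g. continuous_map \<Omega> (subtopology (seminorm_topology \<A>) X\<^sub>0) g \<and>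
             (\<forall>t\<in>topspace \<Omega>. p (f t - g t) < r)"
proof -
  obtain w where w: "locally_finite_cozero_cover \<Omega> I w" "\<forall>i t. w i t \<noteq> 0 \<longrightarrow> h i t \<noteq> 0"
    "\<forall>t\<in>topspace \<Omega>. (\<Sum>i\<in>{i\<in>I. w i t \<noteq> 0}. w i t) = 1"
    using cover by (rule locally_finite_cozero_cover_normalize)
  show ?thesis
    using seminorms p X\<^sub>0 w(1,3) x
  proof (rule approximation_from_partition_of_unity)
    show "p (f t - x i) < r" if "i \<in> I" "t \<in> topspace \<Omega>" "w i t \<noteq> 0" for i t
      using close w(2) that by blast
  qed
qed

section \<open>Countable cozero covers\<close>

lemma separable_seminorm_topology_net:
  assumes seminorms: "\<forall>q\<in>\<A>. seminorm q" and p: "p \<in> \<A>"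
    and dense: "seminorm_topology \<A> closure_of X\<^sub>0 = UNIV"
    and separable: "separable_space (seminorm_topology \<A>)" and "r > 0"
  obtains x :: "nat \<Rightarrow> 'a::real_vector" where "range x \<subseteq> X\<^sub>0" "\<forall>y. \<exists>n. p (y - x n) < r"
proof -
  have p': "seminorm p"
    using seminorms p by blast
  have "\<exists>C. countable C \<and> seminorm_topology \<A> closure_of C = UNIV"
    using separable unfolding separable_space_def by simp
  then obtain C where C: "countable C" "seminorm_topology \<A> closure_of C = UNIV"
    by blast
  have "\<forall>c. \<exists>y. y \<in> X\<^sub>0 \<and> p (y - c) < r / 2"
    using seminorm_topology_dense_approx [OF p' p dense half_gt_zero [OF \<open>r > 0\<close>]] by blast
  then obtain near where near: "\<forall>c. near c \<in> X\<^sub>0 \<and> p (near c - c) < r / 2"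
    by metis
  show thesis
  proof (rule that [of "near \<circ> from_nat_into C"])
    show "range (near \<circ> from_nat_into C) \<subseteq> X\<^sub>0"
      using near by auto
    show "\<forall>y. \<exists>n. p (y - (near \<circ> from_nat_into C) n) < r"
    proof
      fix y
      obtain c where "c \<in> C" "p (c - y) < r / 2"
        using seminorm_topology_dense_approx [OF p' p C(2) half_gt_zero [OF \<open>r > 0\<close>], of y] by blast
      moreover have "p (y - near c) \<le> p (y - c) + p (c - near c)"
        by (rule seminorm_diff_triangle [OF p'])
      moreover have "p (y - c) = p (c - y)" "p (c - near c) = p (near c - c)"
        by (rule seminorm_minus_commute [OF p'])+
      moreover have "p (near c - c) < r / 2"
        using near by blast
      ultimately have "p (y - near c) < r"
        by linarith
      moreover obtain n where "from_nat_into C n = c"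
        using from_nat_into_surj [OF C(1) \<open>c \<in> C\<close>] by blast
      ultimately show "\<exists>n. p (y - (near \<circ> from_nat_into C) n) < r"
        by auto
    qed
  qed
qed

text \<open>
  Near a point where some \<open>\<phi>\<^sub>m\<close> is positive, the subtracted term \<open>n \<Sum>\<^sub>k\<^sub><\<^sub>n \<phi>\<^sub>k\<close> exceeds a bound
  of the \<open>\<phi>\<^sub>n\<close> for all large \<open>n\<close>, so only finitely many modified functions are nonzero
  there; the first \<open>\<phi>\<^sub>m\<close> that is nonzero at a point is left unchanged.
\<close>
definition locally_finite_modification :: "(nat \<Rightarrow> 'a \<Rightarrow> real) \<Rightarrow> nat \<Rightarrow> 'a \<Rightarrow> real"
  where "locally_finite_modification \<phi> n t = max 0 (\<phi> n t - real n * (\<Sum>k<n. \<phi> k t))"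

lemma locally_finite_modification_nonzero:
  assumes "locally_finite_modification \<phi> n t \<noteq> 0"
  shows "real n * (\<Sum>k<n. \<phi> k t) < \<phi> n t"
  using assms unfolding locally_finite_modification_def by (auto simp: max_def split: if_splits)

lemma locally_finite_modification_support:
  assumes "\<And>k. 0 \<le> \<phi> k t" "locally_finite_modification \<phi> n t \<noteq> 0"
  shows "\<phi> n t \<noteq> 0"
proof -
  have "0 \<le> real n * (\<Sum>k<n. \<phi> k t)"
    using assms(1) by (simp add: sum_nonneg)
  with locally_finite_modification_nonzero [OF assms(2)] show ?thesis
    by linarith
qed

lemma locally_finite_modification_Least:
  assumes "\<And>k. 0 \<le> \<phi> k t" "\<exists>n. \<phi> n t \<noteq> 0"
  defines "m \<equiv> LEAST n. \<phi> n t \<noteq> 0"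
  shows "locally_finite_modification \<phi> m t = \<phi> m t"
proof -
  have "\<phi> k t = 0" if "k < m" for k
    using not_less_Least [OF that [unfolded m_def]] by simp
  then show ?thesis
    using assms(1) [of m] by (simp add: locally_finite_modification_def)
qed

lemma locally_finite_modification_vanishes:
  assumes "\<And>k. 0 \<le> \<phi> k t" "\<phi> n t \<le> B" "m < n" "B \<le> real n * \<phi> m t"
  shows "locally_finite_modification \<phi> n t = 0"
proof -
  have "\<phi> m t \<le> (\<Sum>k<n. \<phi> k t)"
    using assms(1,3) by (intro member_le_sum) auto
  then have "real n * \<phi> m t \<le> real n * (\<Sum>k<n. \<phi> k t)"
    by (simp add: mult_left_mono)
  with assms(2,4) show ?thesis
    using locally_finite_modification_nonzero [of \<phi> n t] by fastforce
qed

lemma locally_finite_cozero_cover_modification: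
  fixes \<phi> :: "nat \<Rightarrow> 'a \<Rightarrow> real"
  assumes continuous: "\<And>n. continuous_map X euclideanreal (\<phi> n)"
    and nonneg: "\<And>n t. 0 \<le> \<phi> n t" and bounded: "\<And>n t. \<phi> n t \<le> B"
    and cover: "\<And>t. t \<in> topspace X \<Longrightarrow> \<exists>n. \<phi> n t \<noteq> 0"
  shows "locally_finite_cozero_cover X UNIV (locally_finite_modification \<phi>)"
proof (rule locally_finite_cozero_coverI)
  show "continuous_map X euclideanreal (locally_finite_modification \<phi> n)" for n
    unfolding locally_finite_modification_def [abs_def] by (intro continuous_intros continuous) auto
  show "0 \<le> locally_finite_modification \<phi> n t" for n t
    by (simp add: locally_finite_modification_def)
  show "\<exists>n\<in>UNIV. locally_finite_modification \<phi> n t \<noteq> 0" if "t \<in> topspace X" for t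
    using locally_finite_modification_Least [of \<phi> t, OF nonneg cover [OF that]]
      LeastI_ex [OF cover [OF that]]
    by (intro bexI [of _ "LEAST n. \<phi> n t \<noteq> 0"]) auto
  show "\<exists>W. openin X W \<and> t \<in> W \<and> finite {n\<in>UNIV. \<exists>s\<in>W. locally_finite_modification \<phi> n s \<noteq> 0}"
    if t: "t \<in> topspace X" for t
  proof -
    obtain m where "\<phi> m t \<noteq> 0"
      using cover [OF t] by blast
    define a where "a = \<phi> m t / 2"
    have "a > 0"
      using \<open>\<phi> m t \<noteq> 0\<close> nonneg [of m t] by (simp add: a_def)
    define W where "W = {s \<in> topspace X. \<phi> m s \<in> {a<..}}"
    have "openin X W"
      unfolding W_def by (rule openin_continuous_map_preimage [OF continuous]) simp
    have "t \<in> W"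
      using t \<open>a > 0\<close> by (simp add: W_def a_def)
    obtain N where N: "B < real N * a"
      using ex_less_of_nat_mult [OF \<open>a > 0\<close>] by blast
    have "n < max N (Suc m)" if "s \<in> W" "locally_finite_modification \<phi> n s \<noteq> 0" for n s
    proof (rule ccontr)
      assume "\<not> n < max N (Suc m)"
      then have "real N * a \<le> real n * \<phi> m s"
        using \<open>s \<in> W\<close> \<open>a > 0\<close> by (intro mult_mono) (auto simp: W_def)
      with N \<open>\<not> n < max N (Suc m)\<close> have "locally_finite_modification \<phi> n s = 0"
        by (intro locally_finite_modification_vanishes [of \<phi> s n B m, OF nonneg bounded]) auto
      with that(2) show False
        by simp
    qed
    then have "{n\<in>UNIV. \<exists>s\<in>W. locally_finite_modification \<phi> n s \<noteq> 0} \<subseteq> {..<max N (Suc m)}"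
      by blast
    then have "finite {n\<in>UNIV. \<exists>s\<in>W. locally_finite_modification \<phi> n s \<noteq> 0}"
      by (rule finite_subset) simp
    with \<open>openin X W\<close> \<open>t \<in> W\<close> show ?thesis
      by (intro exI [of _ W] conjI)
  qed
qed

section \<open>Paracompact Hausdorff spaces\<close>

lemma paracompact_spaceE:
  assumes "paracompact_space X" "\<forall>U\<in>\<U>. openin X U" "topspace X \<subseteq> \<Union>\<U>"
  obtains \<V> where "\<forall>V\<in>\<V>. openin X V" "topspace X \<subseteq> \<Union>\<V>"
    "\<forall>V\<in>\<V>. \<exists>U\<in>\<U>. V \<subseteq> U" "locally_finite_in X \<V>"
proof -
  have "(\<forall>U\<in>\<U>. openin X U) \<and> topspace X \<subseteq> \<Union>\<U> \<longrightarrow>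
      (\<exists>\<V>. (\<forall>V\<in>\<V>. openin X V) \<and> topspace X \<subseteq> \<Union>\<V> \<and>
        (\<forall>V\<in>\<V>. \<exists>U\<in>\<U>. V \<subseteq> U) \<and> locally_finite_in X \<V>)"
    using assms(1) unfolding paracompact_space_def by (rule spec)
  then have "\<exists>\<V>. (\<forall>V\<in>\<V>. openin X V) \<and> topspace X \<subseteq> \<Union>\<V> \<and>
        (\<forall>V\<in>\<V>. \<exists>U\<in>\<U>. V \<subseteq> U) \<and> locally_finite_in X \<V>"
    using assms(2,3) by (rule mp [OF _ conjI])
  then show thesis
    by (elim exE conjE) (rule that)
qed

lemma paracompact_space_closure_separation:
  assumes "paracompact_space X" "closedin X C"
    and "\<And>y. y \<in> C \<Longrightarrow> \<exists>G. openin X G \<and> y \<in> G \<and> disjnt (X closure_of G) K"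
  obtains W where "openin X W" "C \<subseteq> W" "disjnt (X closure_of W) K"
proof -
  define \<U> where "\<U> = insert (topspace X - C) {G. openin X G \<and> disjnt (X closure_of G) K}"
  have "\<forall>U\<in>\<U>. openin X U"
    using assms(2) unfolding \<U>_def by auto
  moreover have "topspace X \<subseteq> \<Union>\<U>"
  proof
    fix t assume "t \<in> topspace X"
    show "t \<in> \<Union>\<U>"
    proof (cases "t \<in> C")
      case True
      then obtain G where "openin X G" "t \<in> G" "disjnt (X closure_of G) K"
        using assms(3) by blast
      then have "G \<in> \<U>"
        unfolding \<U>_def by simp
      with \<open>t \<in> G\<close> show ?thesis
        by (rule UnionI [rotated])
    next
      case False
      have "topspace X - C \<in> \<U>"
        unfolding \<U>_def by simp
      with False \<open>t \<in> topspace X\<close> show ?thesis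
        by auto
    qed
  qed
  ultimately obtain \<V> where \<V>: "\<forall>V\<in>\<V>. openin X V" "topspace X \<subseteq> \<Union>\<V>"
    "\<forall>V\<in>\<V>. \<exists>U\<in>\<U>. V \<subseteq> U" "locally_finite_in X \<V>"
    using assms(1) by (rule_tac paracompact_spaceE)
  define \<V>\<^sub>C where "\<V>\<^sub>C = {V\<in>\<V>. V \<inter> C \<noteq> {}}"
  have "locally_finite_in X \<V>\<^sub>C"
    unfolding \<V>\<^sub>C_def by (rule locally_finite_in_subset [OF \<V>(4)]) auto
  then have closure: "X closure_of \<Union>\<V>\<^sub>C = (\<Union>V\<in>\<V>\<^sub>C. X closure_of V)"
    by (rule closure_of_locally_finite_Union)
  have "disjnt (X closure_of V) K" if V: "V \<in> \<V>\<^sub>C" for V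
  proof -
    obtain U where "U \<in> \<U>" "V \<subseteq> U"
      using \<V>(3) V unfolding \<V>\<^sub>C_def by blast
    moreover have "U \<noteq> topspace X - C"
      using V \<open>V \<subseteq> U\<close> unfolding \<V>\<^sub>C_def by auto
    ultimately have "disjnt (X closure_of U) K"
      unfolding \<U>_def by simp
    moreover have "X closure_of V \<subseteq> X closure_of U"
      using \<open>V \<subseteq> U\<close> by (rule closure_of_mono)
    ultimately show ?thesis
      by (rule disjnt_subset1)
  qed
  then have "disjnt (X closure_of \<Union>\<V>\<^sub>C) K"
    unfolding closure by simp
  moreover have "openin X (\<Union>\<V>\<^sub>C)"
    by (rule openin_Union) (simp add: \<V>\<^sub>C_def \<V>(1))
  moreover have "C \<subseteq> \<Union>\<V>\<^sub>C"
  proof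
    fix y assume "y \<in> C"
    then obtain V where "V \<in> \<V>" "y \<in> V"
      using \<V>(2) closedin_subset [OF assms(2)] by blast
    with \<open>y \<in> C\<close> have "V \<in> \<V>\<^sub>C"
      unfolding \<V>\<^sub>C_def by blast
    with \<open>y \<in> V\<close> show "y \<in> \<Union>\<V>\<^sub>C"
      by blast
  qed
  ultimately show thesis
    by (intro that)
qed

lemma paracompact_Hausdorff_imp_regular_space:
  assumes "paracompact_space X" "Hausdorff_space X"
  shows "regular_space X"
  unfolding regular_space_def
proof (intro allI impI)
  fix C a assume "closedin X C \<and> a \<in> topspace X - C"
  then have C: "closedin X C" and a: "a \<in> topspace X" "a \<notin> C"
    by auto
  have separated: "\<exists>G. openin X G \<and> y \<in> G \<and> disjnt (X closure_of G) {a}" if "y \<in> C" for y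
  proof -
    have "y \<in> topspace X" "a \<noteq> y"
      using a \<open>y \<in> C\<close> closedin_subset [OF C] by auto
    then obtain P G where "openin X P" "openin X G" "a \<in> P" "y \<in> G" "disjnt P G"
      using assms(2) a(1) unfolding Hausdorff_space_def by blast
    then have "a \<notin> X closure_of G"
      using openin_Int_closure_of_eq_empty [of X P G] by (auto simp: disjnt_def)
    with \<open>openin X G\<close> \<open>y \<in> G\<close> show ?thesis
      by (auto simp: disjnt_def)
  qed
  obtain W where W: "openin X W" "C \<subseteq> W" "disjnt (X closure_of W) {a}"
    using assms(1) C separated by (rule paracompact_space_closure_separation)
  have "disjnt (topspace X - X closure_of W) W"
    using closure_of_subset [OF openin_subset [OF W(1)]] by (auto simp: disjnt_def)
  with W a show "\<exists>U V. openin X U \<and> openin X V \<and> a \<in> U \<and> C \<subseteq> V \<and> disjnt U V"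
    by (intro exI [of _ "topspace X - X closure_of W"] exI [of _ W]) (auto simp: disjnt_def)
qed

lemma paracompact_regular_imp_normal_space:
  assumes "paracompact_space X" "regular_space X"
  shows "normal_space X"
  unfolding normal_space
proof (intro allI impI)
  fix S T assume "closedin X S \<and> closedin X T \<and> disjnt S T"
  then have S: "closedin X S" and T: "closedin X T" "disjnt S T"
    by auto
  have separated: "\<exists>G. openin X G \<and> y \<in> G \<and> disjnt (X closure_of G) T" if "y \<in> S" for y
  proof -
    have "y \<in> topspace X - T"
      using \<open>y \<in> S\<close> closedin_subset [OF S] T(2) by (auto simp: disjnt_iff)
    then obtain G where "openin X G" "y \<in> G" "disjnt T (X closure_of G)"
      using assms(2) T(1) unfolding regular_space by blast
    then show ?thesis
      by (auto simp: disjnt_sym)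
  qed
  obtain W where "openin X W" "S \<subseteq> W" "disjnt (X closure_of W) T"
    using assms(1) S separated by (rule paracompact_space_closure_separation)
  then show "\<exists>U. openin X U \<and> S \<subseteq> U \<and> disjnt T (X closure_of U)"
    by (auto simp: disjnt_sym)
qed

lemma paracompact_regular_closed_shrinking:
  assumes "paracompact_space X" "regular_space X"
    and "\<forall>V\<in>\<V>. openin X V" "topspace X \<subseteq> \<Union>\<V>"
  obtains F where "\<forall>V. closedin X (F V)" "\<forall>V. F V \<subseteq> V" "topspace X \<subseteq> (\<Union>V\<in>\<V>. F V)"
proof -
  define \<N> where "\<N> = {G. openin X G \<and> (\<exists>V\<in>\<V>. X closure_of G \<subseteq> V)}"
  have "\<forall>G\<in>\<N>. openin X G"
    unfolding \<N>_def by blast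
  moreover have "topspace X \<subseteq> \<Union>\<N>"
  proof
    fix t assume t: "t \<in> topspace X"
    then obtain V where "V \<in> \<V>" "t \<in> V"
      using assms(4) by blast
    have "closedin X (topspace X - V)"
      using assms(3) \<open>V \<in> \<V>\<close> by (simp add: closedin_diff)
    moreover have "t \<in> topspace X - (topspace X - V)"
      using t \<open>t \<in> V\<close> by simp
    ultimately have "\<exists>G. openin X G \<and> t \<in> G \<and> disjnt (topspace X - V) (X closure_of G)"
      using assms(2) unfolding regular_space by simp
    then obtain G where "openin X G" "t \<in> G" "disjnt (topspace X - V) (X closure_of G)"
      by blast
    then have "X closure_of G \<subseteq> V"
      using closure_of_subset_topspace [of X G] by (auto simp: disjnt_def)
    with \<open>openin X G\<close> \<open>V \<in> \<V>\<close> have "G \<in> \<N>"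
      unfolding \<N>_def by blast
    with \<open>t \<in> G\<close> show "t \<in> \<Union>\<N>"
      by blast
  qed
  ultimately obtain \<W> where \<W>: "\<forall>W\<in>\<W>. openin X W" "topspace X \<subseteq> \<Union>\<W>"
    "\<forall>W\<in>\<W>. \<exists>G\<in>\<N>. W \<subseteq> G" "locally_finite_in X \<W>"
    using assms(1) by (rule_tac paracompact_spaceE)
  define F where "F V = (\<Union>W\<in>{W\<in>\<W>. X closure_of W \<subseteq> V}. X closure_of W)" for V
  show thesis
  proof
    show "\<forall>V. closedin X (F V)"
      unfolding F_def by (intro allI closedin_Union_locally_finite_closure locally_finite_in_subset [OF \<W>(4)]) auto
    show "\<forall>V. F V \<subseteq> V"
      unfolding F_def by blast
    show "topspace X \<subseteq> (\<Union>V\<in>\<V>. F V)"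
    proof
      fix t assume "t \<in> topspace X"
      then obtain W where "W \<in> \<W>" "t \<in> W"
        using \<W>(2) by blast
      then obtain G V where "V \<in> \<V>" "W \<subseteq> G" "X closure_of G \<subseteq> V"
        using \<W>(3) unfolding \<N>_def by blast
      then have "X closure_of W \<subseteq> V"
        by (meson closure_of_mono order_trans)
      moreover have "W \<subseteq> X closure_of W"
        using \<open>W \<in> \<W>\<close> \<W>(1) by (simp add: closure_of_subset openin_subset)
      then have "t \<in> X closure_of W"
        using \<open>t \<in> W\<close> by blast
      ultimately show "t \<in> (\<Union>V\<in>\<V>. F V)"
        using \<open>V \<in> \<V>\<close> \<open>W \<in> \<W>\<close> unfolding F_def by blast
    qed
  qed
qed

lemma normal_space_locally_finite_cozero_cover:
  assumes "normal_space X" "\<forall>V\<in>\<V>. openin X V" "locally_finite_in X \<V>"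
    and F: "\<forall>V. closedin X (F V)" "\<forall>V. F V \<subseteq> V" "topspace X \<subseteq> (\<Union>V\<in>\<V>. F V)"
  obtains u where "locally_finite_cozero_cover X \<V> u" "\<forall>V\<in>\<V>. {t \<in> topspace X. u V t \<noteq> 0} \<subseteq> V"
proof -
  have "\<exists>u. continuous_map X (top_of_set {0..1::real}) u \<and> u ` (topspace X - V) \<subseteq> {0} \<and> u ` F V \<subseteq> {1}"
    if "V \<in> \<V>" for V
  proof -
    have "closedin X (topspace X - V)"
      using assms(2) that by (simp add: closedin_diff)
    moreover have "disjnt (topspace X - V) (F V)"
      using F(2) by (auto simp: disjnt_def)
    ultimately obtain u where "continuous_map X (top_of_set {0..1::real}) u"
      "u ` (topspace X - V) \<subseteq> {0}" "u ` F V \<subseteq> {1}"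
      using assms(1) F(1) [rule_format] zero_le_one by (rule_tac Urysohn_lemma)
    then show ?thesis
      by blast
  qed
  then obtain u where u: "\<forall>V\<in>\<V>. continuous_map X (top_of_set {0..1::real}) (u V) \<and>
      u V ` (topspace X - V) \<subseteq> {0} \<and> u V ` F V \<subseteq> {1}"
    by metis
  have support: "{t \<in> topspace X. u V t \<noteq> 0} \<subseteq> V" if "V \<in> \<V>" for V
    using u that by (auto simp: image_subset_iff)
  have "locally_finite_cozero_cover X \<V> u"
  proof (rule locally_finite_cozero_coverI)
    show "continuous_map X euclideanreal (u V)" if "V \<in> \<V>" for V
      using u that by (simp add: continuous_map_in_subtopology)
    show "0 \<le> u V t" if "V \<in> \<V>" "t \<in> topspace X" for V t
      using u that by (simp add: continuous_map_in_subtopology Pi_iff)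
    show "\<exists>V\<in>\<V>. u V t \<noteq> 0" if t: "t \<in> topspace X" for t
    proof -
      obtain V where "V \<in> \<V>" "t \<in> F V"
        using F(3) t by blast
      with u have "u V t = 1"
        by (auto simp: image_subset_iff)
      with \<open>V \<in> \<V>\<close> show ?thesis
        by (intro bexI [of _ V]) simp_all
    qed
    show "\<exists>W. openin X W \<and> t \<in> W \<and> finite {V\<in>\<V>. \<exists>s\<in>W. u V s \<noteq> 0}" if t: "t \<in> topspace X" for t
    proof -
      obtain W where W: "openin X W" "t \<in> W" "finite {V\<in>\<V>. V \<inter> W \<noteq> {}}"
        using assms(3) t unfolding locally_finite_in_def by blast
      have "{V\<in>\<V>. \<exists>s\<in>W. u V s \<noteq> 0} \<subseteq> {V\<in>\<V>. V \<inter> W \<noteq> {}}"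
        using support openin_subset [OF W(1)] by blast
      with W show ?thesis
        by (meson rev_finite_subset)
    qed
  qed
  with support show thesis
    using that by blast
qed

lemma paracompact_Hausdorff_cozero_cover:
  fixes X :: "'a topology"
  assumes "paracompact_space X" "Hausdorff_space X" "\<forall>U\<in>\<U>. openin X U" "topspace X \<subseteq> \<Union>\<U>"
  obtains \<V> :: "'a set set" and h where "locally_finite_cozero_cover X \<V> h"
    "\<forall>V\<in>\<V>. \<exists>U\<in>\<U>. {t \<in> topspace X. h V t \<noteq> 0} \<subseteq> U"
proof -
  have regular: "regular_space X"
    using assms(1,2) by (rule paracompact_Hausdorff_imp_regular_space)
  obtain \<V> where \<V>: "\<forall>V\<in>\<V>. openin X V" "topspace X \<subseteq> \<Union>\<V>"
    "\<forall>V\<in>\<V>. \<exists>U\<in>\<U>. V \<subseteq> U" "locally_finite_in X \<V>"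
    using assms(1,3,4) by (rule paracompact_spaceE)
  obtain F where "\<forall>V. closedin X (F V)" "\<forall>V. F V \<subseteq> V" "topspace X \<subseteq> (\<Union>V\<in>\<V>. F V)"
    using assms(1) regular \<V>(1,2) by (rule paracompact_regular_closed_shrinking)
  moreover have "normal_space X"
    using assms(1) regular by (rule paracompact_regular_imp_normal_space)
  ultimately obtain h where h: "locally_finite_cozero_cover X \<V> h"
    "\<forall>V\<in>\<V>. {t \<in> topspace X. h V t \<noteq> 0} \<subseteq> V"
    using \<V>(1,4) by (rule_tac normal_space_locally_finite_cozero_cover) blast+
  have "\<forall>V\<in>\<V>. \<exists>U\<in>\<U>. {t \<in> topspace X. h V t \<noteq> 0} \<subseteq> U"
    using \<V>(3) h(2) by (meson order_trans)
  with h(1) show thesis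
    by (rule that)
qed

section \<open>Approximation by maps into a dense subspace\<close>

lemma approximation_paracompact:
  fixes f :: "'a \<Rightarrow> 'b::real_vector"
  assumes seminorms: "\<forall>q\<in>\<A>. seminorm q" and X\<^sub>0: "subspace X\<^sub>0"
    and dense: "seminorm_topology \<A> closure_of X\<^sub>0 = UNIV"
    and \<Omega>: "paracompact_space \<Omega>" "Hausdorff_space \<Omega>"
    and "r > 0" and p: "p \<in> \<A>" and f: "continuous_map \<Omega> (seminorm_topology \<A>) f"
  shows "\<exists>g. continuous_map \<Omega> (subtopology (seminorm_topology \<A>) X\<^sub>0) g \<and>
             (\<forall>t\<in>topspace \<Omega>. p (f t - g t) < r)"
proof -
  have p': "seminorm p"
    using seminorms p by blast
  define B where "B x = {t \<in> topspace \<Omega>. p (f t - x) \<in> {..<r}}" for x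
  have "openin \<Omega> (B x)" for x
    unfolding B_def
    by (rule openin_continuous_map_preimage [OF continuous_map_seminorm_diff_compose [OF seminorms p f]])
      simp
  then have B_open: "\<forall>U\<in>B ` X\<^sub>0. openin \<Omega> U"
    by blast
  have B_cover: "topspace \<Omega> \<subseteq> \<Union>(B ` X\<^sub>0)"
  proof
    fix t assume "t \<in> topspace \<Omega>"
    obtain y where "y \<in> X\<^sub>0" "p (y - f t) < r"
      using seminorm_topology_dense_approx [OF p' p dense \<open>r > 0\<close>] by blast
    with \<open>t \<in> topspace \<Omega>\<close> have "t \<in> B y"
      unfolding B_def using seminorm_minus_commute [OF p', of y "f t"] by simp
    with \<open>y \<in> X\<^sub>0\<close> show "t \<in> \<Union>(B ` X\<^sub>0)"
      by blast
  qed
  obtain \<V> :: "'a set set" and h where h: "locally_finite_cozero_cover \<Omega> \<V> h"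
    and subordinate: "\<forall>V\<in>\<V>. \<exists>U\<in>B ` X\<^sub>0. {t \<in> topspace \<Omega>. h V t \<noteq> 0} \<subseteq> U"
    using \<Omega> B_open B_cover by (rule paracompact_Hausdorff_cozero_cover)
  have "\<forall>V\<in>\<V>. \<exists>x\<in>X\<^sub>0. {t \<in> topspace \<Omega>. h V t \<noteq> 0} \<subseteq> B x"
    using subordinate by (auto dest: bex_imageD)
  then obtain x where x: "\<forall>V\<in>\<V>. x V \<in> X\<^sub>0 \<and> {t \<in> topspace \<Omega>. h V t \<noteq> 0} \<subseteq> B (x V)"
    by metis
  show ?thesis
  proof (rule approximation_from_cozero_cover [OF seminorms p X\<^sub>0 h])
    show "x V \<in> X\<^sub>0" if "V \<in> \<V>" for V
      using x that by blast
    show "p (f t - x V) < r" if "V \<in> \<V>" "t \<in> topspace \<Omega>" "h V t \<noteq> 0" for V t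
    proof -
      have "t \<in> B (x V)"
        using x that by blast
      then show ?thesis
        by (simp add: B_def)
    qed
  qed
qed

lemma approximation_separable:
  fixes f :: "'a \<Rightarrow> 'b::real_vector"
  assumes seminorms: "\<forall>q\<in>\<A>. seminorm q" and X\<^sub>0: "subspace X\<^sub>0"
    and dense: "seminorm_topology \<A> closure_of X\<^sub>0 = UNIV"
    and separable: "separable_space (seminorm_topology \<A>)"
    and "r > 0" and p: "p \<in> \<A>" and f: "continuous_map \<Omega> (seminorm_topology \<A>) f"
  shows "\<exists>g. continuous_map \<Omega> (subtopology (seminorm_topology \<A>) X\<^sub>0) g \<and>
             (\<forall>t\<in>topspace \<Omega>. p (f t - g t) < r)"
proof -
  have p': "seminorm p"
    using seminorms p by blast
  obtain x :: "nat \<Rightarrow> 'b" where x: "range x \<subseteq> X\<^sub>0" "\<forall>y. \<exists>n. p (y - x n) < r"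
    using seminorms p dense separable \<open>r > 0\<close> by (rule separable_seminorm_topology_net)
  define \<phi> where "\<phi> n t = max 0 (r - p (f t - x n))" for n t
  have "continuous_map \<Omega> euclideanreal (\<phi> n)" for n
    unfolding \<phi>_def
    by (intro continuous_intros continuous_map_seminorm_diff_compose [OF seminorms p f])
  moreover have "0 \<le> \<phi> n t" "\<phi> n t \<le> r" for n t
    using seminorm_nonneg [OF p'] \<open>r > 0\<close> by (auto simp: \<phi>_def)
  moreover have "\<exists>n. \<phi> n t \<noteq> 0" for t
  proof -
    obtain n where "p (f t - x n) < r"
      using x(2) by blast
    then show ?thesis
      by (intro exI [of _ n]) (simp add: \<phi>_def)
  qed
  ultimately have cover: "locally_finite_cozero_cover \<Omega> UNIV (locally_finite_modification \<phi>)"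
    by (rule locally_finite_cozero_cover_modification)
  show ?thesis
  proof (rule approximation_from_cozero_cover [OF seminorms p X\<^sub>0 cover])
    show "x n \<in> X\<^sub>0" if "n \<in> UNIV" for n
      using x(1) by blast
    show "p (f t - x n) < r" if "n \<in> UNIV" "t \<in> topspace \<Omega>" "locally_finite_modification \<phi> n t \<noteq> 0"
      for n t
    proof -
      have "\<phi> n t \<noteq> 0"
        using that(3) by (rule locally_finite_modification_support [rotated]) (simp add: \<phi>_def)
      then show ?thesis
        by (auto simp: \<phi>_def max_def split: if_splits)
    qed
  qed
qed

theorem theorem3p20:
  fixes \<Omega> :: "'a topology"
    and \<A> :: "('b::real_vector \<Rightarrow> real) set"
    and X\<^sub>0 :: "'b set"
  assumes seminorms: "\<forall>p\<in>\<A>. seminorm p"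
    and sub: "subspace X\<^sub>0"
    and dense: "(seminorm_topology \<A>) closure_of X\<^sub>0 = UNIV"
    and alt: "(paracompact_space \<Omega> \<and> Hausdorff_space \<Omega>) \<or> separable_space (seminorm_topology \<A>)"
    and eps: "\<epsilon> > 0"
    and p: "p \<in> \<A>"
    and f: "continuous_map \<Omega> (seminorm_topology \<A>) f"
  shows "\<exists>g. continuous_map \<Omega> (subtopology (seminorm_topology \<A>) X\<^sub>0) g \<and>
             (SUP t\<in>topspace \<Omega>. ereal (p (f t - g t))) < ereal \<epsilon>"
proof -
  \<comment> \<open>Strict pointwise bounds only give a non-strict bound on the supremum, hence \<open>\<epsilon> / 2\<close>.\<close>
  have "\<epsilon> / 2 > 0"
    using eps by simp
  have "\<exists>g. continuous_map \<Omega> (subtopology (seminorm_topology \<A>) X\<^sub>0) g \<and>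
      (\<forall>t\<in>topspace \<Omega>. p (f t - g t) < \<epsilon> / 2)"
    using alt
  proof
    assume "paracompact_space \<Omega> \<and> Hausdorff_space \<Omega>"
    then show ?thesis
      using approximation_paracompact [OF seminorms sub dense _ _ \<open>\<epsilon> / 2 > 0\<close> p f] by blast
  next
    assume "separable_space (seminorm_topology \<A>)"
    then show ?thesis
      by (rule approximation_separable [OF seminorms sub dense _ \<open>\<epsilon> / 2 > 0\<close> p f])
  qed
  then obtain g where g: "continuous_map \<Omega> (subtopology (seminorm_topology \<A>) X\<^sub>0) g"
    and close: "\<forall>t\<in>topspace \<Omega>. p (f t - g t) < \<epsilon> / 2"
    by blast
  have "(SUP t\<in>topspace \<Omega>. ereal (p (f t - g t))) \<le> ereal (\<epsilon> / 2)"
    by (rule SUP_least) (use close in auto)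
  also have "\<dots> < ereal \<epsilon>"
    using eps by simp
  finally show ?thesis
    using g by blast
qed

end
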